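(* Let $L$ be a finite-dimensional semisimple Leibniz algebra over $\mathbb{C}$ with a decomposition $L=(\oplus_{i=1}^m\mathfrak{g}_i)\ltimes(\oplus_{k=1}^n I_k)$, where $\mathfrak{g}_1,\dots,\mathfrak{g}_m$ are simple Lie subalgebras whose direct sum is a subalgebra complementary to $I$, and $I=\oplus_{k=1}^n I_k$ is a decomposition into simple $(\oplus_{i=1}^m\mathfrak{g}_i)$-submodules. Let $\mathrm{B}\Gamma$ be the bipartite graph with vertex classes $\{I_1,\dots,I_n\}$ and $\{\mathfrak{g}_1,\dots,\mathfrak{g}_m\}$, where $I_k$ and $\mathfrak{g}_i$ are joined by an edge if and only if $[I_k,\mathfrak{g}_i]=I_k$. Then $L$ is indecomposable if and only if $\mathrm{B}\Gamma$ is connected.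
   Context: A Leibniz algebra is a vector space $L$ with a bilinear bracket satisfying $[[x,y],z]=[[x,z],y]+[x,[y,z]]$. The subspace $I=\mathrm{Span}\langle [x,x]\mid x\in L\rangle$ is an ideal with $[L,I]=0$, $\mathfrak{g}_L=L/I$ is a Lie algebra, and $L$ is semisimple if $\mathfrak{g}_L$ is semisimple; then $L$ has a subalgebra isomorphic to $\mathfrak{g}_L$ complementary to $I$, and $I$ is a module over it via the right bracket $i.g=[i,g]$. For each $k,i$ one has $[I_k,\mathfrak{g}_i]\in\{I_k,\{0\}\}$. An algebra is indecomposable if it is not a direct sum $A_1\oplus A_2$ of two proper (nonzero) ideals. *)

theory Defs
  imports Complex_Main
begin

text \<open>A Leibniz algebra over the complex numbers is modelled on a type 'v carrying an
  abelian group structure, a scalar multiplication sc (a complex vector space structure)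
  and a bracket br.\<close>

definition bilinear_bracket :: "(complex \<Rightarrow> 'v::ab_group_add \<Rightarrow> 'v) \<Rightarrow> ('v \<Rightarrow> 'v \<Rightarrow> 'v) \<Rightarrow> bool" where
  "bilinear_bracket sc br \<longleftrightarrow>
     (\<forall>x y z. br (x + y) z = br x z + br y z) \<and>
     (\<forall>x y z. br x (y + z) = br x y + br x z) \<and>
     (\<forall>a x y. br (sc a x) y = sc a (br x y)) \<and>
     (\<forall>a x y. br x (sc a y) = sc a (br x y))"

definition leibniz_algebra :: "(complex \<Rightarrow> 'v::ab_group_add \<Rightarrow> 'v) \<Rightarrow> ('v \<Rightarrow> 'v \<Rightarrow> 'v) \<Rightarrow> bool" where
  "leibniz_algebra sc br \<longleftrightarrow> vector_space sc \<and> bilinear_bracket sc br \<and>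
     (\<forall>x y z. br (br x y) z = br (br x z) y + br x (br y z))"

definition finite_dim :: "(complex \<Rightarrow> 'v::ab_group_add \<Rightarrow> 'v) \<Rightarrow> bool" where
  "finite_dim sc \<longleftrightarrow> (\<exists>B. finite B \<and> module.span sc B = UNIV)"

definition sq_ideal :: "(complex \<Rightarrow> 'v::ab_group_add \<Rightarrow> 'v) \<Rightarrow> ('v \<Rightarrow> 'v \<Rightarrow> 'v) \<Rightarrow> 'v set" where
  "sq_ideal sc br = module.span sc {br x x | x. True}"

definition brset :: "(complex \<Rightarrow> 'v::ab_group_add \<Rightarrow> 'v) \<Rightarrow> ('v \<Rightarrow> 'v \<Rightarrow> 'v) \<Rightarrow> 'v set \<Rightarrow> 'v set \<Rightarrow> 'v set" where
  "brset sc br A B = module.span sc {br a b | a b. a \<in> A \<and> b \<in> B}"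

definition subalg :: "(complex \<Rightarrow> 'v::ab_group_add \<Rightarrow> 'v) \<Rightarrow> ('v \<Rightarrow> 'v \<Rightarrow> 'v) \<Rightarrow> 'v set \<Rightarrow> bool" where
  "subalg sc br A \<longleftrightarrow> module.subspace sc A \<and> (\<forall>a\<in>A. \<forall>b\<in>A. br a b \<in> A)"

definition ideal_in :: "(complex \<Rightarrow> 'v::ab_group_add \<Rightarrow> 'v) \<Rightarrow> ('v \<Rightarrow> 'v \<Rightarrow> 'v) \<Rightarrow> 'v set \<Rightarrow> 'v set \<Rightarrow> bool" where
  "ideal_in sc br J G \<longleftrightarrow> module.subspace sc J \<and> J \<subseteq> G \<and>
     (\<forall>x\<in>J. \<forall>g\<in>G. br x g \<in> J \<and> br g x \<in> J)"

text \<open>Simple Lie subalgebra: a subalgebra on which the bracket is alternating (so it is a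
  Lie algebra), which is non-abelian and has no ideals other than 0 and itself.\<close>
definition simple_lie_subalg :: "(complex \<Rightarrow> 'v::ab_group_add \<Rightarrow> 'v) \<Rightarrow> ('v \<Rightarrow> 'v \<Rightarrow> 'v) \<Rightarrow> 'v set \<Rightarrow> bool" where
  "simple_lie_subalg sc br G \<longleftrightarrow> subalg sc br G \<and> (\<forall>x\<in>G. br x x = 0) \<and>
     (\<exists>x\<in>G. \<exists>y\<in>G. br x y \<noteq> 0) \<and>
     (\<forall>J. ideal_in sc br J G \<longrightarrow> J = {0} \<or> J = G)"

primrec derived :: "(complex \<Rightarrow> 'v::ab_group_add \<Rightarrow> 'v) \<Rightarrow> ('v \<Rightarrow> 'v \<Rightarrow> 'v) \<Rightarrow> 'v set \<Rightarrow> nat \<Rightarrow> 'v set" where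
  "derived sc br J 0 = J"
| "derived sc br J (Suc k) = brset sc br (derived sc br J k) (derived sc br J k)"

text \<open>L is semisimple iff the Lie algebra L/I is semisimple, i.e. has no nonzero solvable
  ideal.  Unfolded through the quotient: ideals of L/I are J/I for ideals J of L containing I,
  and J/I is solvable iff some derived power of J lies in I.\<close>
definition semisimple_leibniz :: "(complex \<Rightarrow> 'v::ab_group_add \<Rightarrow> 'v) \<Rightarrow> ('v \<Rightarrow> 'v \<Rightarrow> 'v) \<Rightarrow> bool" where
  "semisimple_leibniz sc br \<longleftrightarrow>
     (\<forall>J. ideal_in sc br J UNIV \<and> sq_ideal sc br \<subseteq> J \<and> (\<exists>k. derived sc br J k \<subseteq> sq_ideal sc br)
        \<longrightarrow> J = sq_ideal sc br)"

definition sumset :: "(nat \<Rightarrow> 'v::ab_group_add set) \<Rightarrow> nat \<Rightarrow> 'v set" where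
  "sumset A n = {\<Sum>i<n. x i | x. \<forall>i<n. x i \<in> A i}"

definition indep_family :: "(nat \<Rightarrow> 'v::ab_group_add set) \<Rightarrow> nat \<Rightarrow> bool" where
  "indep_family A n \<longleftrightarrow> (\<forall>x. (\<forall>i<n. x i \<in> A i) \<and> (\<Sum>i<n. x i) = 0 \<longrightarrow> (\<forall>i<n. x i = 0))"

definition submod :: "(complex \<Rightarrow> 'v::ab_group_add \<Rightarrow> 'v) \<Rightarrow> ('v \<Rightarrow> 'v \<Rightarrow> 'v) \<Rightarrow> 'v set \<Rightarrow> 'v set \<Rightarrow> bool" where
  "submod sc br S M \<longleftrightarrow> module.subspace sc M \<and> M \<subseteq> sq_ideal sc br \<and> (\<forall>x\<in>M. \<forall>s\<in>S. br x s \<in> M)"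

definition simple_submod :: "(complex \<Rightarrow> 'v::ab_group_add \<Rightarrow> 'v) \<Rightarrow> ('v \<Rightarrow> 'v \<Rightarrow> 'v) \<Rightarrow> 'v set \<Rightarrow> 'v set \<Rightarrow> bool" where
  "simple_submod sc br S M \<longleftrightarrow> submod sc br S M \<and> M \<noteq> {0} \<and>
     (\<forall>N. submod sc br S N \<and> N \<subseteq> M \<longrightarrow> N = {0} \<or> N = M)"

definition indecomposable :: "(complex \<Rightarrow> 'v::ab_group_add \<Rightarrow> 'v) \<Rightarrow> ('v \<Rightarrow> 'v \<Rightarrow> 'v) \<Rightarrow> bool" where
  "indecomposable sc br \<longleftrightarrow> \<not> (\<exists>A1 A2. ideal_in sc br A1 UNIV \<and> ideal_in sc br A2 UNIV \<and>
      A1 \<noteq> {0} \<and> A2 \<noteq> {0} \<and> A1 \<inter> A2 = {0} \<and> (\<forall>v. \<exists>a1\<in>A1. \<exists>a2\<in>A2. v = a1 + a2))"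

text \<open>Bipartite graph with vertices Inl k (k < n, the I_k) and Inr i (i < m, the g_i);
  E k i says that I_k and g_i are joined.\<close>
definition bip_vertices :: "nat \<Rightarrow> nat \<Rightarrow> (nat + nat) set" where
  "bip_vertices n m = Inl ` {..<n} \<union> Inr ` {..<m}"

fun bip_adj :: "(nat \<Rightarrow> nat \<Rightarrow> bool) \<Rightarrow> nat + nat \<Rightarrow> nat + nat \<Rightarrow> bool" where
  "bip_adj E (Inl k) (Inr i) = E k i"
| "bip_adj E (Inr i) (Inl k) = E k i"
| "bip_adj E _ _ = False"

definition bip_connected :: "nat \<Rightarrow> nat \<Rightarrow> (nat \<Rightarrow> nat \<Rightarrow> bool) \<Rightarrow> bool" where
  "bip_connected n m E \<longleftrightarrow>
     (\<forall>u\<in>bip_vertices n m. \<forall>v\<in>bip_vertices n m.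
        (\<lambda>a b. a \<in> bip_vertices n m \<and> b \<in> bip_vertices n m \<and> bip_adj E a b)\<^sup>*\<^sup>* u v)"

end

theory Submission
  imports Defs
begin

text \<open>
  Index the summands \<open>I\<^sub>k\<close> and \<open>\<gg>\<^sub>i\<close> by the vertices of the bipartite graph, so that
  \<open>L\<close> is the direct sum of these components.  Brackets of two components vanish, except
  \<open>[\<gg>\<^sub>i, \<gg>\<^sub>i] = \<gg>\<^sub>i\<close> and \<open>[I\<^sub>k, \<gg>\<^sub>i]\<close>, which is \<open>I\<^sub>k\<close> along an edge and \<open>0\<close> otherwise.
  Hence the components belonging to a union of connected components of the graph span an
  ideal, and a disconnected graph splits \<open>L\<close>.

  Conversely, let \<open>L = A\<^sub>1 \<oplus> A\<^sub>2\<close> with ideals \<open>A\<^sub>1, A\<^sub>2\<close>.  The projection onto \<open>A\<^sub>1\<close> is an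
  algebra endomorphism; composed with the projection onto \<open>\<gg>\<^sub>i\<close> it splits the simple Lie
  algebra \<open>\<gg>\<^sub>i\<close> into two commuting ideals, so one of them vanishes.  Since \<open>\<gg>\<^sub>i\<close> is perfect
  and \<open>[L, I] = 0\<close>, the projection onto \<open>A\<^sub>1\<close> (or onto \<open>A\<^sub>2\<close>) then vanishes on all of \<open>\<gg>\<^sub>i\<close>,
  i.e. \<open>\<gg>\<^sub>i\<close> lies in one summand.  Along an edge \<open>[I\<^sub>k, \<gg>\<^sub>i] = I\<^sub>k \<noteq> 0\<close> the vertices
  \<open>I\<^sub>k\<close> and \<open>\<gg>\<^sub>i\<close> lie in the same summand, so for a connected graph one summand is
  everything and the other is zero.
\<close>

section \<open>Leibniz algebras\<close>

locale leibniz =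
  fixes sc :: "complex \<Rightarrow> 'v::ab_group_add \<Rightarrow> 'v"
    and br :: "'v \<Rightarrow> 'v \<Rightarrow> 'v"
  assumes leibniz_algebra: "leibniz_algebra sc br"

sublocale leibniz \<subseteq> vector_space sc
  using leibniz_algebra unfolding leibniz_algebra_def by simp

sublocale leibniz \<subseteq> vector_space_pair sc sc
  by unfold_locales

context leibniz
begin

lemma linear_bracket_left: "Vector_Spaces.linear sc sc (\<lambda>x. br x y)"
  using leibniz_algebra
  unfolding Vector_Spaces.linear_iff leibniz_algebra_def bilinear_bracket_def by simp

lemma linear_bracket_right: "Vector_Spaces.linear sc sc (br x)"
  using leibniz_algebra
  unfolding Vector_Spaces.linear_iff leibniz_algebra_def bilinear_bracket_def by simp

lemma bracket_zero_left [simp]: "br 0 y = 0"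
  using linear_0[OF linear_bracket_left] .

lemma bracket_zero_right [simp]: "br x 0 = 0"
  using linear_0[OF linear_bracket_right] .

lemma bracket_add_left: "br (x + x') y = br x y + br x' y"
  using linear_add[OF linear_bracket_left] .

lemma bracket_add_right: "br x (y + y') = br x y + br x y'"
  using linear_add[OF linear_bracket_right] .

lemma leibniz_identity: "br (br x y) z = br (br x z) y + br x (br y z)"
  using leibniz_algebra unfolding leibniz_algebra_def by blast

lemma bracket_sq_ideal_right:
  assumes "y \<in> sq_ideal sc br"
  shows "br x y = 0"
proof (rule linear_eq_0_on_span[OF linear_bracket_right])
  show "y \<in> span {br w w |w. True}"
    using assms unfolding sq_ideal_def .
  fix z assume "z \<in> {br w w |w. True}"
  then obtain w where "z = br w w" by blast
  then show "br x z = 0" using leibniz_identity[of x w w] by simp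
qed

lemma subspace_sq_ideal: "subspace (sq_ideal sc br)"
  unfolding sq_ideal_def by simp

lemma subspace_brset: "subspace (brset sc br A B)"
  unfolding brset_def by simp

lemma bracket_in_brset: "x \<in> A \<Longrightarrow> y \<in> B \<Longrightarrow> br x y \<in> brset sc br A B"
  unfolding brset_def by (rule span_base) blast

lemma brset_subset:
  assumes "subspace T" and "\<And>x y. x \<in> A \<Longrightarrow> y \<in> B \<Longrightarrow> br x y \<in> T"
  shows "brset sc br A B \<subseteq> T"
  unfolding brset_def using assms by (intro span_minimal) auto

lemma submod_if_ideal: "ideal_in sc br A UNIV \<Longrightarrow> A \<subseteq> sq_ideal sc br \<Longrightarrow> submod sc br S A"
  unfolding ideal_in_def submod_def by blast

lemma bracket_left_span_mem:
  assumes T: "subspace T" and a: "a \<in> span A" and gen: "\<And>x. x \<in> A \<Longrightarrow> br x b \<in> T"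
  shows "br a b \<in> T"
  using span_induct[OF a linear_subspace_linear_preimage[OF linear_bracket_left T]] gen by simp

lemma bracket_span_mem:
  assumes T: "subspace T" and a: "a \<in> span A" and b: "b \<in> span B"
    and gen: "\<And>x y. x \<in> A \<Longrightarrow> y \<in> B \<Longrightarrow> br x y \<in> T"
  shows "br a b \<in> T"
proof (rule bracket_left_span_mem[OF T a])
  fix x assume "x \<in> A"
  then show "br x b \<in> T"
    using span_induct[OF b linear_subspace_linear_preimage[OF linear_bracket_right T]] gen by simp
qed

lemma bilinear_eq_on_span:
  assumes "\<And>y. Vector_Spaces.linear sc sc (\<lambda>x. F x y)" "\<And>y. Vector_Spaces.linear sc sc (\<lambda>x. H x y)"
    and "\<And>x. Vector_Spaces.linear sc sc (F x)" "\<And>x. Vector_Spaces.linear sc sc (H x)"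
    and "\<And>x y. x \<in> A \<Longrightarrow> y \<in> B \<Longrightarrow> F x y = H x y"
    and "a \<in> span A" "b \<in> span B"
  shows "F a b = H a b"
proof -
  have "F x b = H x b" if "x \<in> A" for x
    using assms(3,4) assms(5)[OF that] assms(7) by (rule linear_eq_on_span)
  then show ?thesis
    by (rule linear_eq_on_span[OF assms(1,2) _ assms(6)])
qed

lemma simple_lie_subalg_perfect:
  assumes G: "simple_lie_subalg sc br G"
  shows "brset sc br G G = G"
proof -
  have subalg: "subspace G" "\<And>x y. x \<in> G \<Longrightarrow> y \<in> G \<Longrightarrow> br x y \<in> G"
    using G unfolding simple_lie_subalg_def subalg_def by blast+
  have sub: "brset sc br G G \<subseteq> G"
    using subalg by (rule brset_subset)
  have "ideal_in sc br (brset sc br G G) G"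
    unfolding ideal_in_def
  proof (intro conjI ballI)
    fix x y assume "x \<in> brset sc br G G" "y \<in> G"
    then have "x \<in> G" using sub by blast
    then show "br x y \<in> brset sc br G G" "br y x \<in> brset sc br G G"
      using \<open>y \<in> G\<close> bracket_in_brset by blast+
  qed (fact subspace_brset sub)+
  moreover have "brset sc br G G \<noteq> {0}"
  proof -
    obtain x y where "x \<in> G" "y \<in> G" "br x y \<noteq> 0"
      using G unfolding simple_lie_subalg_def by blast
    then show ?thesis using bracket_in_brset by blast
  qed
  ultimately show ?thesis
    using G unfolding simple_lie_subalg_def by blast
qed

lemma hom_vanishes_on_perfect:
  assumes f: "Vector_Spaces.linear sc sc f"
    and hom: "\<And>a b. f (br a b) = br (f a) (f b)"
    and perfect: "brset sc br G G = G"
    and into_sq_ideal: "\<And>y z. y \<in> G \<Longrightarrow> z \<in> G \<Longrightarrow> f (br y z) \<in> sq_ideal sc br"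
    and x: "x \<in> G"
  shows "f x = 0"
proof -
  have span: "y \<in> span {br y z |y z. y \<in> G \<and> z \<in> G}" if "y \<in> G" for y
    using perfect that unfolding brset_def by simp
  have "f y \<in> sq_ideal sc br" if "y \<in> G" for y
    using span_induct[OF span[OF that] linear_subspace_linear_preimage[OF f subspace_sq_ideal]]
      into_sq_ideal by blast
  then have "f (br y z) = 0" if "y \<in> G" "z \<in> G" for y z
    using that by (simp add: hom bracket_sq_ideal_right)
  then show ?thesis
    using linear_eq_0_on_span[OF f _ span[OF x]] by blast
qed

lemma ideal_image:
  assumes subalg: "subalg sc br G"
    and f: "Vector_Spaces.linear sc sc f" and f': "Vector_Spaces.linear sc sc f'"
    and f_into: "\<And>y. y \<in> G \<Longrightarrow> f y \<in> G"
    and sum: "\<And>y. y \<in> G \<Longrightarrow> f y + f' y = y"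
    and hom: "\<And>a b. f (br a b) = br (f a) (f b)"
    and cross: "\<And>a b. br (f a) (f' b) = 0" "\<And>a b. br (f' b) (f a) = 0"
  shows "ideal_in sc br (f ` G) G"
  unfolding ideal_in_def
proof (intro conjI ballI)
  have G: "subspace G" "\<And>x y. x \<in> G \<Longrightarrow> y \<in> G \<Longrightarrow> br x y \<in> G"
    using subalg unfolding subalg_def by blast+
  show "subspace (f ` G)"
    using linear_subspace_image[OF f G(1)] .
  show "f ` G \<subseteq> G"
    using f_into by blast
  fix x z assume "x \<in> f ` G" and z: "z \<in> G"
  then obtain a where a: "a \<in> G" "x = f a" by blast
  have "br x z = br (f a) (f z + f' z)" using sum[OF z] a by simp
  also have "\<dots> = f (br a z)" by (simp add: bracket_add_right cross hom)
  finally show "br x z \<in> f ` G" using G(2)[OF a(1) z] by blast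
  have "br z x = br (f z + f' z) (f a)" using sum[OF z] a by simp
  also have "\<dots> = f (br z a)" by (simp add: bracket_add_left cross hom)
  finally show "br z x \<in> f ` G" using G(2)[OF z a(1)] by blast
qed

end

section \<open>Bipartite graphs\<close>

lemma mem_bip_vertices [simp]:
  "Inl k \<in> bip_vertices n m \<longleftrightarrow> k < n" "Inr i \<in> bip_vertices n m \<longleftrightarrow> i < m"
  unfolding bip_vertices_def by auto

lemma finite_bip_vertices [simp]: "finite (bip_vertices n m)"
  unfolding bip_vertices_def by simp

lemma bip_vertices_cases:
  assumes "u \<in> bip_vertices n m"
  obtains (Inl) k where "u = Inl k" "k < n" | (Inr) i where "u = Inr i" "i < m"
  using assms unfolding bip_vertices_def by blast

lemma sum_bip_vertices:
  "(\<Sum>u\<in>bip_vertices n m. f u) = (\<Sum>k<n. f (Inl k)) + (\<Sum>i<m. f (Inr i))"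
  unfolding bip_vertices_def
  by (subst sum.union_disjoint) (auto simp: sum.reindex)

lemma sumset_single:
  assumes "\<And>j. j < m \<Longrightarrow> 0 \<in> A j" and "i < m" and "y \<in> A i"
  shows "y \<in> sumset A m"
proof -
  have "(\<Sum>j<m. if j = i then y else 0) = y"
    using assms(2) by (simp add: sum.delta)
  moreover have "\<forall>j<m. (if j = i then y else 0) \<in> A j"
    using assms by simp
  ultimately show ?thesis
    unfolding sumset_def by (intro CollectI exI[of _ "\<lambda>j. if j = i then y else 0"]) simp
qed

lemma indep_familyD:
  "indep_family A m \<Longrightarrow> (\<And>j. j < m \<Longrightarrow> x j \<in> A j) \<Longrightarrow> (\<Sum>j<m. x j) = 0 \<Longrightarrow> i < m \<Longrightarrow> x i = 0"
  unfolding indep_family_def by blast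

lemma bip_adj_sym: "bip_adj E u v \<Longrightarrow> bip_adj E v u"
  by (cases u; cases v) auto

definition bip_closed :: "nat \<Rightarrow> nat \<Rightarrow> (nat \<Rightarrow> nat \<Rightarrow> bool) \<Rightarrow> (nat + nat) set \<Rightarrow> bool" where
  "bip_closed n m E W \<longleftrightarrow>
     (\<forall>u\<in>W \<inter> bip_vertices n m. \<forall>v\<in>bip_vertices n m. bip_adj E u v \<longrightarrow> v \<in> W)"

lemma bip_closedD:
  "bip_closed n m E W \<Longrightarrow> u \<in> W \<Longrightarrow> u \<in> bip_vertices n m \<Longrightarrow> v \<in> bip_vertices n m \<Longrightarrow>
    bip_adj E u v \<Longrightarrow> v \<in> W"
  unfolding bip_closed_def by blast

lemma bip_connected_closed:
  assumes conn: "bip_connected n m E" and closed: "bip_closed n m E W"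
    and u: "u \<in> W" "u \<in> bip_vertices n m"
  shows "bip_vertices n m \<subseteq> W"
proof
  fix v assume v: "v \<in> bip_vertices n m"
  have "(\<lambda>a b. a \<in> bip_vertices n m \<and> b \<in> bip_vertices n m \<and> bip_adj E a b)\<^sup>*\<^sup>* u v"
    using conn u v unfolding bip_connected_def by blast
  then show "v \<in> W"
    by (induction rule: rtranclp_induct) (use u closed in \<open>auto simp: bip_closed_def\<close>)
qed

lemma bip_disconnected_split:
  assumes "\<not> bip_connected n m E"
  obtains W where "bip_closed n m E W" "bip_closed n m E (bip_vertices n m - W)"
    "W \<inter> bip_vertices n m \<noteq> {}" "bip_vertices n m - W \<noteq> {}"
proof -
  let ?V = "bip_vertices n m"
  let ?R = "\<lambda>a b. a \<in> ?V \<and> b \<in> ?V \<and> bip_adj E a b"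
  obtain u w where u: "u \<in> ?V" and w: "w \<in> ?V" and "\<not> ?R\<^sup>*\<^sup>* u w"
    using assms unfolding bip_connected_def by blast
  define W where "W = {v \<in> ?V. ?R\<^sup>*\<^sup>* u v}"
  have "bip_closed n m E W"
    unfolding bip_closed_def W_def by (auto intro: rtranclp.rtrancl_into_rtrancl)
  moreover have "bip_closed n m E (?V - W)"
    unfolding bip_closed_def W_def
    by (auto intro: rtranclp.rtrancl_into_rtrancl bip_adj_sym)
  moreover have "u \<in> W \<inter> ?V" and "w \<in> ?V - W"
    using u w \<open>\<not> ?R\<^sup>*\<^sup>* u w\<close> unfolding W_def by auto
  ultimately show ?thesis using that by blast
qed

lemma bip_connected_without_right_vertices:
  assumes "bip_connected n 0 E"
  shows "n \<le> 1"
proof (rule ccontr)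
  assume "\<not> n \<le> 1"
  then have "(\<lambda>a b. a \<in> bip_vertices n 0 \<and> b \<in> bip_vertices n 0 \<and> bip_adj E a b)\<^sup>*\<^sup>* (Inl 0) (Inl 1)"
    using assms unfolding bip_connected_def by simp
  then show False
  proof (cases rule: converse_rtranclpE)
    case (step c)
    then show False by (cases c) auto
  qed simp
qed

section \<open>Components of a semisimple Leibniz algebra\<close>

locale levi_decomposition = leibniz sc br
  for sc :: "complex \<Rightarrow> 'v::ab_group_add \<Rightarrow> 'v" and br +
  fixes g :: "nat \<Rightarrow> 'v set" and m :: nat
    and Ik :: "nat \<Rightarrow> 'v set" and n :: nat
  assumes simple_g: "\<forall>i<m. simple_lie_subalg sc br (g i)"
    and g_commute: "\<forall>i<m. \<forall>j<m. i \<noteq> j \<longrightarrow> (\<forall>x\<in>g i. \<forall>y\<in>g j. br x y = 0)"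
    and indep_g: "indep_family g m"
    and levi_inter: "sumset g m \<inter> sq_ideal sc br = {0}"
    and levi_cover: "\<forall>v. \<exists>s\<in>sumset g m. \<exists>x\<in>sq_ideal sc br. v = s + x"
    and simple_Ik: "\<forall>k<n. simple_submod sc br (sumset g m) (Ik k)"
    and indep_Ik: "indep_family Ik n"
    and sumset_Ik: "sumset Ik n = sq_ideal sc br"
begin

definition component :: "nat + nat \<Rightarrow> 'v set" where
  "component = case_sum Ik g"

lemma component_simps [simp]: "component (Inl k) = Ik k" "component (Inr i) = g i"
  unfolding component_def by simp_all

definition edge :: "nat \<Rightarrow> nat \<Rightarrow> bool" where
  "edge k i \<longleftrightarrow> brset sc br (Ik k) (g i) = Ik k"

lemma subalg_g: "i < m \<Longrightarrow> subalg sc br (g i)"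
  using simple_g unfolding simple_lie_subalg_def by blast

lemma g_perfect: "i < m \<Longrightarrow> brset sc br (g i) (g i) = g i"
  using simple_g simple_lie_subalg_perfect by blast

lemma subspace_g: "i < m \<Longrightarrow> subspace (g i)"
  using subalg_g unfolding subalg_def by blast

lemma bracket_g: "i < m \<Longrightarrow> x \<in> g i \<Longrightarrow> y \<in> g i \<Longrightarrow> br x y \<in> g i"
  using subalg_g unfolding subalg_def by blast

lemma bracket_g_commute:
  "i < m \<Longrightarrow> j < m \<Longrightarrow> i \<noteq> j \<Longrightarrow> x \<in> g i \<Longrightarrow> y \<in> g j \<Longrightarrow> br x y = 0"
  using g_commute by blast

lemma submod_Ik: "k < n \<Longrightarrow> submod sc br (sumset g m) (Ik k)"
  using simple_Ik unfolding simple_submod_def by blast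

lemma Ik_simple:
  "k < n \<Longrightarrow> submod sc br (sumset g m) N \<Longrightarrow> N \<subseteq> Ik k \<Longrightarrow> N = {0} \<or> N = Ik k"
  using simple_Ik unfolding simple_submod_def by blast

lemma subspace_Ik: "k < n \<Longrightarrow> subspace (Ik k)"
  using submod_Ik unfolding submod_def by blast

lemma Ik_subset_sq_ideal: "k < n \<Longrightarrow> Ik k \<subseteq> sq_ideal sc br"
  using submod_Ik unfolding submod_def by blast

lemma bracket_Ik_right: "k < n \<Longrightarrow> y \<in> Ik k \<Longrightarrow> br x y = 0"
  using Ik_subset_sq_ideal bracket_sq_ideal_right by blast

lemma bracket_Ik_levi: "k < n \<Longrightarrow> x \<in> Ik k \<Longrightarrow> s \<in> sumset g m \<Longrightarrow> br x s \<in> Ik k"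
  using submod_Ik unfolding submod_def by blast

lemma g_subset_levi: "i < m \<Longrightarrow> g i \<subseteq> sumset g m"
  using sumset_single[of m g] subspace_0[OF subspace_g] by blast

lemma bracket_Ik_g: "k < n \<Longrightarrow> i < m \<Longrightarrow> x \<in> Ik k \<Longrightarrow> y \<in> g i \<Longrightarrow> br x y \<in> Ik k"
  using bracket_Ik_levi g_subset_levi by blast

lemma subspace_component: "u \<in> bip_vertices n m \<Longrightarrow> subspace (component u)"
  by (erule bip_vertices_cases) (simp_all add: subspace_g subspace_Ik)

lemma component_nonzero: "u \<in> bip_vertices n m \<Longrightarrow> component u \<noteq> {0}"
proof (erule bip_vertices_cases)
  fix k assume "u = Inl k" "k < n"
  then show ?thesis using simple_Ik unfolding simple_submod_def by simp
next
  fix i assume i: "u = Inr i" "i < m"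
  then obtain x y where "x \<in> g i" "br x y \<noteq> 0"
    using simple_g unfolding simple_lie_subalg_def by blast
  then show ?thesis using i by force
qed

lemma bracket_g_levi:
  assumes i: "i < m" and y: "y \<in> g i" and s: "s \<in> sumset g m"
  shows "br y s \<in> g i"
proof -
  obtain t where t: "s = (\<Sum>j<m. t j)" "\<forall>j<m. t j \<in> g j"
    using s unfolding sumset_def by blast
  have "br y s = (\<Sum>j<m. br y (t j))"
    unfolding t(1) by (rule linear_sum[OF linear_bracket_right])
  also have "\<dots> \<in> g i"
  proof (rule subspace_sum[OF subspace_g[OF i]])
    fix j assume j: "j \<in> {..<m}"
    show "br y (t j) \<in> g i"
    proof (cases "j = i")
      case True
      then show ?thesis using bracket_g[OF i y] t(2) j by simp
    next
      case False
      then show ?thesis using bracket_g_commute[OF i _ _ y] t(2) j subspace_0[OF subspace_g[OF i]]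
        by simp
    qed
  qed
  finally show ?thesis .
qed

lemma brset_Ik_g_cases:
  assumes k: "k < n" and i: "i < m"
  shows "brset sc br (Ik k) (g i) = {0} \<or> brset sc br (Ik k) (g i) = Ik k"
proof -
  let ?B = "brset sc br (Ik k) (g i)"
  have sub: "?B \<subseteq> Ik k"
    using k i bracket_Ik_g subspace_Ik by (intro brset_subset) auto
  have "br x s \<in> ?B" if x: "x \<in> ?B" and s: "s \<in> sumset g m" for x s
  proof (rule bracket_left_span_mem[OF subspace_brset x[unfolded brset_def]])
    fix z assume "z \<in> {br a b |a b. a \<in> Ik k \<and> b \<in> g i}"
    then obtain a b where ab: "z = br a b" "a \<in> Ik k" "b \<in> g i" by blast
    have "br z s = br (br a s) b + br a (br b s)"
      unfolding ab(1) by (rule leibniz_identity)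
    moreover have "br (br a s) b \<in> ?B" "br a (br b s) \<in> ?B"
      using bracket_in_brset bracket_Ik_levi[OF k ab(2) s] ab(2,3) bracket_g_levi[OF i ab(3) s]
      by blast+
    ultimately show "br z s \<in> ?B"
      using subspace_add[OF subspace_brset] by simp
  qed
  then have "submod sc br (sumset g m) ?B"
    unfolding submod_def using sub Ik_subset_sq_ideal[OF k] subspace_brset by blast
  then show ?thesis
    using Ik_simple[OF k _ sub] by blast
qed

definition is_decomposition :: "'v \<Rightarrow> (nat + nat \<Rightarrow> 'v) \<Rightarrow> bool" where
  "is_decomposition v x \<longleftrightarrow>
     (\<forall>u\<in>bip_vertices n m. x u \<in> component u) \<and> v = (\<Sum>u\<in>bip_vertices n m. x u)"

lemma decomposition_exists: "\<exists>x. is_decomposition v x"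
proof -
  obtain s y where s: "s \<in> sumset g m" and y: "y \<in> sumset Ik n" and v: "v = s + y"
    using levi_cover sumset_Ik by blast
  obtain a where a: "s = (\<Sum>i<m. a i)" "\<forall>i<m. a i \<in> g i"
    using s unfolding sumset_def by blast
  obtain b where b: "y = (\<Sum>k<n. b k)" "\<forall>k<n. b k \<in> Ik k"
    using y unfolding sumset_def by blast
  have "is_decomposition v (case_sum b a)"
    unfolding is_decomposition_def sum_bip_vertices
    using a b v by (auto elim!: bip_vertices_cases simp: add.commute)
  then show ?thesis by blast
qed

lemma decomposition_zero:
  assumes x: "\<forall>u\<in>bip_vertices n m. x u \<in> component u"
    and sum: "(\<Sum>u\<in>bip_vertices n m. x u) = 0"
    and u: "u \<in> bip_vertices n m"
  shows "x u = 0"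
proof -
  let ?s = "\<Sum>i<m. x (Inr i)" and ?y = "\<Sum>k<n. x (Inl k)"
  have xr: "x (Inr i) \<in> g i" if "i < m" for i
    using x that by (metis component_simps(2) mem_bip_vertices(2))
  have xl: "x (Inl k) \<in> Ik k" if "k < n" for k
    using x that by (metis component_simps(1) mem_bip_vertices(1))
  have s: "?s \<in> sumset g m"
    unfolding sumset_def using xr by blast
  have y: "?y \<in> sq_ideal sc br"
    unfolding sumset_Ik[symmetric] sumset_def using xl by blast
  have "?s = - ?y"
    using sum unfolding sum_bip_vertices by (simp add: add_eq_0_iff2 add.commute)
  then have "?s \<in> sq_ideal sc br"
    using y subspace_neg[OF subspace_sq_ideal] by simp
  then have "?s = 0"
    using s levi_inter by blast
  then have "?y = 0"
    using \<open>?s = - ?y\<close> by simp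
  show ?thesis
    using u
  proof (cases rule: bip_vertices_cases)
    case (Inl k)
    then show ?thesis using indep_familyD[OF indep_Ik xl \<open>?y = 0\<close>] by simp
  next
    case (Inr i)
    then show ?thesis using indep_familyD[OF indep_g xr \<open>?s = 0\<close>] by simp
  qed
qed

definition proj :: "nat + nat \<Rightarrow> 'v \<Rightarrow> 'v" where
  "proj u v = (SOME x. is_decomposition v x) u"

lemma is_decomposition_proj: "is_decomposition v (\<lambda>u. proj u v)"
  unfolding proj_def using someI_ex[OF decomposition_exists] by simp

lemma proj_in_component: "u \<in> bip_vertices n m \<Longrightarrow> proj u v \<in> component u"
  using is_decomposition_proj unfolding is_decomposition_def by blast

lemma sum_proj: "(\<Sum>u\<in>bip_vertices n m. proj u v) = v"
  using is_decomposition_proj unfolding is_decomposition_def by simp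

lemma proj_eq:
  assumes x: "is_decomposition v x" and u: "u \<in> bip_vertices n m"
  shows "proj u v = x u"
proof -
  have "\<forall>w\<in>bip_vertices n m. proj w v - x w \<in> component w"
    using x proj_in_component subspace_diff[OF subspace_component]
    unfolding is_decomposition_def by blast
  moreover have "(\<Sum>w\<in>bip_vertices n m. proj w v - x w) = 0"
    using x sum_proj unfolding is_decomposition_def by (simp add: sum_subtractf)
  ultimately show ?thesis
    using decomposition_zero[OF _ _ u] by fastforce
qed

lemma linear_proj:
  assumes u: "u \<in> bip_vertices n m"
  shows "Vector_Spaces.linear sc sc (proj u)"
  unfolding Vector_Spaces.linear_iff
proof (intro conjI allI)
  fix a b c
  have "is_decomposition (a + b) (\<lambda>w. proj w a + proj w b)"
    unfolding is_decomposition_def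
    using proj_in_component subspace_add[OF subspace_component] sum_proj
    by (simp add: sum.distrib)
  then show "proj u (a + b) = proj u a + proj u b"
    using proj_eq[OF _ u] by simp
  have "is_decomposition (sc c a) (\<lambda>w. sc c (proj w a))"
    unfolding is_decomposition_def
    using proj_in_component subspace_scale[OF subspace_component] sum_proj
    by (simp add: scale_sum_right[symmetric])
  then show "proj u (sc c a) = sc c (proj u a)"
    using proj_eq[OF _ u] by simp
qed (fact vector_space_axioms)+

lemma proj_component:
  assumes u: "u \<in> bip_vertices n m" and w: "w \<in> bip_vertices n m" and y: "y \<in> component w"
  shows "proj u y = (if u = w then y else 0)"
proof -
  have "is_decomposition y (\<lambda>u. if u = w then y else 0)"
    unfolding is_decomposition_def
    using w y subspace_0[OF subspace_component] by (simp add: sum.delta)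
  then show ?thesis using proj_eq[OF _ u] by simp
qed

lemma span_components: "v \<in> span (\<Union>u\<in>bip_vertices n m. component u)"
proof -
  have "(\<Sum>u\<in>bip_vertices n m. proj u v) \<in> span (\<Union>u\<in>bip_vertices n m. component u)"
    using proj_in_component by (intro span_sum span_base) blast
  then show ?thesis by (simp add: sum_proj)
qed

lemma sq_ideal_if_proj_g_zero:
  assumes "\<forall>i<m. proj (Inr i) v = 0"
  shows "v \<in> sq_ideal sc br"
proof -
  have "v = (\<Sum>k<n. proj (Inl k) v)"
    using sum_proj[of v] assms unfolding sum_bip_vertices by simp
  moreover have "\<forall>k<n. proj (Inl k) v \<in> Ik k"
    using proj_in_component[of "Inl _"] by simp
  ultimately show ?thesis
    unfolding sumset_Ik[symmetric] sumset_def by blast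
qed

lemma trivial_if_no_vertices:
  assumes "m = 0" "n = 0"
  shows "(v :: 'v) = 0"
  using span_components[of v] assms unfolding bip_vertices_def by simp

lemma mem_Ik_0_if_single_vertex:
  assumes "m = 0" "n = 1"
  shows "v \<in> Ik 0"
proof -
  have "v \<in> span (Ik 0)"
    using span_components[of v] assms unfolding bip_vertices_def by (simp add: lessThan_Suc)
  moreover have "subspace (Ik 0)"
    using subspace_Ik assms by simp
  ultimately show ?thesis
    by (metis span_eq_iff)
qed

lemma bracket_components:
  assumes u: "u \<in> bip_vertices n m" "x \<in> component u"
    and w: "w \<in> bip_vertices n m" "y \<in> component w"
  shows "br x y = 0 \<or> br x y \<in> component u \<and> (u = w \<or> bip_adj edge u w)"
  using u
proof (cases rule: bip_vertices_cases)
  case (Inl k)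
  show ?thesis
    using w
  proof (cases rule: bip_vertices_cases)
    case (Inr i)
    then show ?thesis
      using u w Inl brset_Ik_g_cases[of k i] bracket_in_brset[of x "Ik k" y "g i"]
      unfolding edge_def by auto
  qed (use w bracket_Ik_right in auto)
next
  case (Inr i)
  show ?thesis
    using w
  proof (cases rule: bip_vertices_cases)
    case (Inr j)
    then show ?thesis
      using u w \<open>u = Inr i\<close> \<open>i < m\<close> bracket_g bracket_g_commute by (cases "i = j") auto
  qed (use w bracket_Ik_right in auto)
qed

lemma proj_g_bracket_components:
  assumes i: "i < m" and u: "u \<in> bip_vertices n m" "x \<in> component u"
    and w: "w \<in> bip_vertices n m" "y \<in> component w"
  shows "proj (Inr i) (br x y) = br (proj (Inr i) x) (proj (Inr i) y)"
proof -
  have i': "Inr i \<in> bip_vertices n m" using i by simp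
  have "br x y = 0 \<or> br x y \<in> component u"
    using bracket_components[OF u w] by blast
  then have lhs: "proj (Inr i) (br x y) = (if Inr i = u then br x y else 0)"
    using proj_component[OF i' u(1)] linear_0[OF linear_proj[OF i']] by auto
  have "br x y = 0" if "u = Inr i" "w \<noteq> Inr i"
    using w
  proof (cases rule: bip_vertices_cases)
    case (Inl k)
    then show ?thesis using w bracket_Ik_right by simp
  next
    case (Inr j)
    then show ?thesis using that u w i bracket_g_commute by simp
  qed
  then show ?thesis
    using lhs proj_component[OF i' u] proj_component[OF i' w] by auto
qed

lemma proj_g_bracket:
  assumes i: "i < m"
  shows "proj (Inr i) (br a b) = br (proj (Inr i) a) (proj (Inr i) b)"
proof (rule bilinear_eq_on_span[of "\<lambda>a b. proj (Inr i) (br a b)"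
      "\<lambda>a b. br (proj (Inr i) a) (proj (Inr i) b)", OF _ _ _ _ _ span_components span_components])
  have p: "Vector_Spaces.linear sc sc (proj (Inr i))"
    using linear_proj i by simp
  show "Vector_Spaces.linear sc sc (\<lambda>x. proj (Inr i) (br x y))" for y
    using Vector_Spaces.linear_compose[OF linear_bracket_left p] by (simp add: comp_def)
  show "Vector_Spaces.linear sc sc (\<lambda>x. br (proj (Inr i) x) (proj (Inr i) y))" for y
    using Vector_Spaces.linear_compose[OF p linear_bracket_left] by (simp add: comp_def)
  show "Vector_Spaces.linear sc sc (\<lambda>y. proj (Inr i) (br x y))" for x
    using Vector_Spaces.linear_compose[OF linear_bracket_right p] by (simp add: comp_def)
  show "Vector_Spaces.linear sc sc (\<lambda>y. br (proj (Inr i) x) (proj (Inr i) y))" for x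
    using Vector_Spaces.linear_compose[OF p linear_bracket_right] by (simp add: comp_def)
qed (use proj_g_bracket_components[OF i] in blast)

section \<open>Disconnected graphs give decompositions\<close>

definition summand :: "(nat + nat) set \<Rightarrow> 'v set" where
  "summand W = span (\<Union>u\<in>W \<inter> bip_vertices n m. component u)"

lemma component_subset_summand:
  "u \<in> W \<Longrightarrow> u \<in> bip_vertices n m \<Longrightarrow> component u \<subseteq> summand W"
  unfolding summand_def by (auto intro: span_base)

lemma zero_in_summand: "0 \<in> summand W"
  unfolding summand_def by (rule span_zero)

lemma bracket_summand_generators:
  assumes closed: "bip_closed n m edge W"
    and u: "u \<in> W" "u \<in> bip_vertices n m" "a \<in> component u"
    and w: "w \<in> bip_vertices n m" "b \<in> component w"
  shows "br a b \<in> summand W \<and> br b a \<in> summand W"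
proof
  show "br a b \<in> summand W"
    using bracket_components[OF u(2,3) w] component_subset_summand[OF u(1,2)] zero_in_summand
    by auto
  show "br b a \<in> summand W"
  proof (cases "br b a = 0")
    case False
    then have ba: "br b a \<in> component w" and wu: "w = u \<or> bip_adj edge w u"
      using bracket_components[OF w u(2,3)] by auto
    from wu have "w \<in> W"
    proof
      assume "bip_adj edge w u"
      then show ?thesis using bip_closedD[OF closed u(1,2) w(1)] bip_adj_sym by blast
    qed (use u(1) in simp)
    then show ?thesis
      using ba component_subset_summand w(1) by blast
  qed (simp add: zero_in_summand)
qed

lemma ideal_summand:
  assumes closed: "bip_closed n m edge W"
  shows "ideal_in sc br (summand W) UNIV"
  unfolding ideal_in_def
proof (intro conjI ballI)
  show subspace: "subspace (summand W)"
    unfolding summand_def by simp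
  fix x y assume x: "x \<in> summand W"
  show "br x y \<in> summand W"
    using bracket_summand_generators[OF closed]
    by (intro bracket_span_mem[OF subspace x[unfolded summand_def] span_components]) blast
  show "br y x \<in> summand W"
    using bracket_summand_generators[OF closed]
    by (intro bracket_span_mem[OF subspace span_components x[unfolded summand_def]]) blast
qed simp

lemma summand_nonzero:
  assumes "u \<in> W" "u \<in> bip_vertices n m"
  shows "summand W \<noteq> {0}"
  using component_nonzero[OF assms(2)] subspace_0[OF subspace_component[OF assms(2)]]
    component_subset_summand[OF assms] by blast

lemma proj_summand:
  assumes v: "v \<in> summand W" and u: "u \<in> bip_vertices n m" "u \<notin> W"
  shows "proj u v = 0"
proof (rule linear_eq_0_on_span[OF linear_proj[OF u(1)] _ v[unfolded summand_def]])
  fix x assume "x \<in> (\<Union>w\<in>W \<inter> bip_vertices n m. component w)"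
  then obtain w where "w \<in> W" "w \<in> bip_vertices n m" "x \<in> component w" by blast
  then show "proj u x = 0"
    using proj_component[OF u(1)] u(2) by auto
qed

lemma summand_inter:
  assumes "W \<inter> W' = {}"
  shows "summand W \<inter> summand W' = {0}"
proof -
  have "v = 0" if "v \<in> summand W" "v \<in> summand W'" for v
  proof -
    have "proj u v = 0" if "u \<in> bip_vertices n m" for u
      using proj_summand \<open>v \<in> summand W\<close> \<open>v \<in> summand W'\<close> that assms by blast
    then show ?thesis
      using sum_proj[of v] by simp
  qed
  then show ?thesis
    using zero_in_summand by blast
qed

lemma summand_cover:
  assumes "bip_vertices n m \<subseteq> W \<union> W'"
  shows "\<exists>a\<in>summand W. \<exists>b\<in>summand W'. v = a + b"
proof -
  have "(\<Union>u\<in>bip_vertices n m. component u) \<subseteq>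
      (\<Union>u\<in>W \<inter> bip_vertices n m. component u) \<union> (\<Union>u\<in>W' \<inter> bip_vertices n m. component u)"
    using assms by blast
  then have "v \<in> span ((\<Union>u\<in>W \<inter> bip_vertices n m. component u) \<union> (\<Union>u\<in>W' \<inter> bip_vertices n m. component u))"
    using span_components span_mono by blast
  then show ?thesis
    unfolding span_Un summand_def by blast
qed

lemma decomposable_if_disconnected:
  assumes "\<not> bip_connected n m edge"
  shows "\<not> indecomposable sc br"
proof -
  obtain W where W: "bip_closed n m edge W" and W': "bip_closed n m edge (bip_vertices n m - W)"
    and u: "W \<inter> bip_vertices n m \<noteq> {}" and w: "bip_vertices n m - W \<noteq> {}"
    using bip_disconnected_split[OF assms] by blast
  show ?thesis
    unfolding indecomposable_def not_not
  proof (intro exI conjI)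
    show "ideal_in sc br (summand W) UNIV" "ideal_in sc br (summand (bip_vertices n m - W)) UNIV"
      using ideal_summand[OF W] ideal_summand[OF W'] .
    show "summand W \<noteq> {0}" "summand (bip_vertices n m - W) \<noteq> {0}"
      using u w summand_nonzero by blast+
    show "summand W \<inter> summand (bip_vertices n m - W) = {0}"
      by (rule summand_inter) blast
    show "\<forall>v. \<exists>a\<in>summand W. \<exists>b\<in>summand (bip_vertices n m - W). v = a + b"
      using summand_cover by blast
  qed
qed

end

section \<open>Splittings into two ideals\<close>

locale ideal_splitting = leibniz sc br
  for sc :: "complex \<Rightarrow> 'v::ab_group_add \<Rightarrow> 'v" and br +
  fixes A1 A2 :: "'v set"
  assumes ideal_A1: "ideal_in sc br A1 UNIV" and ideal_A2: "ideal_in sc br A2 UNIV"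
    and inter: "A1 \<inter> A2 = {0}" and cover: "\<forall>v. \<exists>a1\<in>A1. \<exists>a2\<in>A2. v = a1 + a2"

sublocale ideal_splitting \<subseteq> flip: ideal_splitting sc br A2 A1
proof
  show "\<forall>v. \<exists>a1\<in>A2. \<exists>a2\<in>A1. v = a1 + a2"
  proof
    fix v
    obtain a1 a2 where "a1 \<in> A1" "a2 \<in> A2" "v = a1 + a2"
      using cover by blast
    then show "\<exists>a1\<in>A2. \<exists>a2\<in>A1. v = a1 + a2"
      by (metis add.commute)
  qed
qed (use ideal_A1 ideal_A2 inter in auto)

context ideal_splitting
begin

lemma subspace_A1: "subspace A1"
  using ideal_A1 unfolding ideal_in_def by blast

lemma bracket_A1: "a \<in> A1 \<Longrightarrow> br a b \<in> A1 \<and> br b a \<in> A1"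
  using ideal_A1 unfolding ideal_in_def by blast

end

context ideal_splitting
begin

lemma bracket_A1_A2: "a \<in> A1 \<Longrightarrow> b \<in> A2 \<Longrightarrow> br a b = 0 \<and> br b a = 0"
  using bracket_A1[of a b] flip.bracket_A1[of b a] inter by blast

definition split_proj :: "'v \<Rightarrow> 'v" where
  "split_proj v = (SOME a. a \<in> A1 \<and> v - a \<in> A2)"

lemma split_proj_mem: "split_proj v \<in> A1" "v - split_proj v \<in> A2"
proof -
  obtain a1 a2 where "a1 \<in> A1" "a2 \<in> A2" "v = a1 + a2"
    using cover by blast
  then have "\<exists>a. a \<in> A1 \<and> v - a \<in> A2" by force
  then show "split_proj v \<in> A1" "v - split_proj v \<in> A2"
    unfolding split_proj_def by (metis (mono_tags, lifting) someI_ex)+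
qed

lemma split_proj_eq:
  assumes "a \<in> A1" "v - a \<in> A2"
  shows "split_proj v = a"
proof -
  have "split_proj v - a \<in> A1"
    using split_proj_mem(1) assms(1) subspace_diff[OF subspace_A1] by blast
  moreover have "split_proj v - a = (v - a) - (v - split_proj v)" by simp
  then have "split_proj v - a \<in> A2"
    using assms(2) split_proj_mem(2) subspace_diff[OF flip.subspace_A1] by metis
  ultimately have "split_proj v - a = 0"
    using inter by blast
  then show ?thesis by simp
qed

lemma linear_split_proj: "Vector_Spaces.linear sc sc split_proj"
  unfolding Vector_Spaces.linear_iff
proof (intro conjI allI)
  fix x y c
  have "x + y - (split_proj x + split_proj y) = (x - split_proj x) + (y - split_proj y)" by simp
  then show "split_proj (x + y) = split_proj x + split_proj y"
    using split_proj_mem subspace_add[OF subspace_A1] subspace_add[OF flip.subspace_A1] by (metis split_proj_eq)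
  have "sc c x - sc c (split_proj x) = sc c (x - split_proj x)" by (simp add: scale_right_diff_distrib)
  then show "split_proj (sc c x) = sc c (split_proj x)"
    using split_proj_mem subspace_scale[OF subspace_A1] subspace_scale[OF flip.subspace_A1] by (metis split_proj_eq)
qed (fact vector_space_axioms)+

lemma bracket_split_proj_right: "br (split_proj y) (split_proj z) = br (split_proj y) z"
proof -
  have "br (split_proj y) z = br (split_proj y) (split_proj z + (z - split_proj z))" by simp
  also have "\<dots> = br (split_proj y) (split_proj z)"
    using bracket_A1_A2[OF split_proj_mem(1) split_proj_mem(2), of y z]
    by (simp only: bracket_add_right) simp
  finally show ?thesis by (rule sym)
qed

lemma split_proj_bracket: "split_proj (br a b) = br (split_proj a) (split_proj b)"
proof (rule split_proj_eq)
  let ?p = split_proj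
  show "br (?p a) (?p b) \<in> A1"
    using bracket_A1 split_proj_mem(1) by blast
  have "br a b = br (?p a + (a - ?p a)) (?p b + (b - ?p b))" by simp
  also have "\<dots> = br (?p a) (?p b) + br (a - ?p a) (b - ?p b)"
    using bracket_A1_A2[OF split_proj_mem(1) split_proj_mem(2)]
    by (simp only: bracket_add_left bracket_add_right) simp
  finally have "br a b - br (?p a) (?p b) = br (a - ?p a) (b - ?p b)" by simp
  then show "br a b - br (?p a) (?p b) \<in> A2"
    using flip.bracket_A1[OF split_proj_mem(2)] by simp
qed

end

locale levi_ideal_splitting =
  levi_decomposition sc br g m Ik n + ideal_splitting sc br A1 A2
  for sc :: "complex \<Rightarrow> 'v::ab_group_add \<Rightarrow> 'v" and br g m Ik n A1 A2

sublocale levi_ideal_splitting \<subseteq> flip: levi_ideal_splitting sc br g m Ik n A2 A1 ..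

context levi_ideal_splitting
begin

definition g_part :: "nat \<Rightarrow> 'v \<Rightarrow> 'v" where
  "g_part i y = proj (Inr i) (split_proj y)"

lemma linear_g_part: "i < m \<Longrightarrow> Vector_Spaces.linear sc sc (g_part i)"
  using Vector_Spaces.linear_compose[OF linear_split_proj linear_proj[of "Inr i"]]
  unfolding g_part_def comp_def by simp

lemma g_part_in_g: "i < m \<Longrightarrow> g_part i y \<in> g i"
  unfolding g_part_def using proj_in_component[of "Inr i"] by simp

lemma g_part_bracket: "i < m \<Longrightarrow> g_part i (br a b) = br (g_part i a) (g_part i b)"
  unfolding g_part_def by (simp add: split_proj_bracket proj_g_bracket)

lemma g_subset_A2_if_g_part_vanishes:
  assumes i: "i < m" and vanish: "\<forall>y\<in>g i. g_part i y = 0"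
  shows "g i \<subseteq> A2"
proof
  have into_sq_ideal: "split_proj (br y z) \<in> sq_ideal sc br" if yz: "y \<in> g i" "z \<in> g i" for y z
  proof (rule sq_ideal_if_proj_g_zero, intro allI impI)
    fix j assume j: "j < m"
    have "proj (Inr j) (split_proj (br y z)) = proj (Inr j) (br (split_proj y) z)"
      by (simp add: split_proj_bracket bracket_split_proj_right)
    also have "\<dots> = br (g_part j y) (proj (Inr j) z)"
      using proj_g_bracket[OF j] unfolding g_part_def .
    also have "\<dots> = 0"
    proof (cases "j = i")
      case True
      then show ?thesis using vanish yz(1) by simp
    next
      case False
      then show ?thesis using proj_component[of "Inr j" "Inr i" z] i j yz(2) by simp
    qed
    finally show "proj (Inr j) (split_proj (br y z)) = 0" .
  qed
  fix y assume y: "y \<in> g i"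
  have "split_proj y = 0"
    using hom_vanishes_on_perfect[OF linear_split_proj split_proj_bracket g_perfect[OF i]
        into_sq_ideal y] .
  then show "y \<in> A2"
    using split_proj_mem(2)[of y] by simp
qed

end

context levi_ideal_splitting
begin

lemma g_part_add_flip:
  assumes i: "i < m" and y: "y \<in> g i"
  shows "g_part i y + flip.g_part i y = y"
proof -
  have "flip.split_proj y = y - split_proj y"
    using flip.split_proj_eq split_proj_mem by simp
  then have "g_part i y + flip.g_part i y = proj (Inr i) y"
    using linear_add[OF linear_proj[of "Inr i"], of "split_proj y" "y - split_proj y"] i
    unfolding g_part_def flip.g_part_def by simp
  then show ?thesis
    using proj_component[of "Inr i" "Inr i" y] i y by simp
qed

lemma bracket_g_part_flip:
  assumes i: "i < m"
  shows "br (g_part i a) (flip.g_part i b) = 0 \<and> br (flip.g_part i b) (g_part i a) = 0"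
  unfolding g_part_def flip.g_part_def proj_g_bracket[OF i, symmetric]
  using bracket_A1_A2[OF split_proj_mem(1) flip.split_proj_mem(1)] linear_0[OF linear_proj[of "Inr i"]] i
  by simp

lemma g_subset_summand:
  assumes i: "i < m"
  shows "g i \<subseteq> A1 \<or> g i \<subseteq> A2"
proof -
  have "ideal_in sc br (g_part i ` g i) (g i)" "ideal_in sc br (flip.g_part i ` g i) (g i)"
    using ideal_image[OF subalg_g linear_g_part flip.linear_g_part g_part_in_g g_part_add_flip
        g_part_bracket] ideal_image[OF subalg_g flip.linear_g_part linear_g_part flip.g_part_in_g
        _ flip.g_part_bracket] g_part_add_flip bracket_g_part_flip i
    by (simp_all add: add.commute)
  then consider "g_part i ` g i = {0}" | "flip.g_part i ` g i = {0}"
    | "g_part i ` g i = g i" "flip.g_part i ` g i = g i"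
    using simple_g i unfolding simple_lie_subalg_def by blast
  then show ?thesis
  proof cases
    case 1
    then show ?thesis using g_subset_A2_if_g_part_vanishes[OF i] by blast
  next
    case 2
    then show ?thesis using flip.g_subset_A2_if_g_part_vanishes[OF i] by blast
  next
    \<comment> \<open>the two images commute, so they cannot both be the non-abelian \<open>g i\<close>\<close>
    case 3
    obtain x y where "x \<in> g i" "y \<in> g i" "br x y \<noteq> 0"
      using simple_g i unfolding simple_lie_subalg_def by blast
    then show ?thesis
      using 3 bracket_g_part_flip[OF i] by (metis imageE)
  qed
qed

lemma component_subset_A1_adjacent:
  assumes u: "u \<in> bip_vertices n m" and w: "w \<in> bip_vertices n m" and adj: "bip_adj edge u w"
    and sub: "component u \<subseteq> A1"
  shows "component w \<subseteq> A1"
  using u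
proof (cases rule: bip_vertices_cases)
  case (Inl k)
  then obtain i where i: "w = Inr i" "i < m" and e: "edge k i"
    using w adj by (cases w) auto
  show ?thesis
  proof (rule ccontr)
    assume "\<not> component w \<subseteq> A1"
    then have "g i \<subseteq> A2"
      using g_subset_summand[OF i(2)] i(1) by auto
    then have "brset sc br (Ik k) (g i) \<subseteq> {0}"
      using sub Inl bracket_A1_A2 by (intro brset_subset) auto
    then show False
      using e component_nonzero[OF u] subspace_0[OF subspace_component[OF u]] Inl
      unfolding edge_def by auto
  qed
next
  case (Inr i)
  then obtain k where k: "w = Inl k" "k < n" and e: "edge k i"
    using w adj by (cases w) auto
  have "brset sc br (Ik k) (g i) \<subseteq> A1"
    using sub Inr bracket_A1 subspace_A1 by (intro brset_subset) auto
  then show ?thesis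
    using e k unfolding edge_def by simp
qed

lemma A2_trivial_if_connected:
  assumes conn: "bip_connected n m edge" and u: "u \<in> bip_vertices n m" "component u \<subseteq> A1"
  shows "A2 = {0}"
proof -
  have closed: "bip_closed n m edge {w. component w \<subseteq> A1}"
    unfolding bip_closed_def using component_subset_A1_adjacent by blast
  have "bip_vertices n m \<subseteq> {w. component w \<subseteq> A1}"
    by (rule bip_connected_closed[OF conn closed, of u]) (use u in simp_all)
  then have "(\<Union>w\<in>bip_vertices n m. component w) \<subseteq> A1"
    by blast
  then have "span (\<Union>w\<in>bip_vertices n m. component w) \<subseteq> A1"
    using span_minimal subspace_A1 by blast
  then have "A2 \<subseteq> A1 \<inter> A2"
    using span_components by blast
  then show ?thesis
    using inter flip.subspace_A1 subspace_0 by blast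
qed

lemma component_in_summand:
  assumes conn: "bip_connected n m edge" and nonzero: "A1 \<noteq> {0}"
  obtains u where "u \<in> bip_vertices n m" "component u \<subseteq> A1 \<or> component u \<subseteq> A2"
proof (cases "m = 0")
  case False
  then show ?thesis
    using that[of "Inr 0"] g_subset_summand[of 0] by simp
next
  case True
  then have "n \<le> 1"
    using bip_connected_without_right_vertices conn by simp
  moreover have "n \<noteq> 0"
    using trivial_if_no_vertices[OF True] nonzero subspace_0[OF subspace_A1] by blast
  ultimately have n: "n = 1" by simp
  then have "A1 \<subseteq> Ik 0"
    using mem_Ik_0_if_single_vertex[OF True] by blast
  then have "A1 = Ik 0"
    using Ik_simple[of 0 A1] submod_if_ideal[OF ideal_A1] Ik_subset_sq_ideal[of 0] n nonzero
    by auto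
  then show ?thesis
    using that[of "Inl 0"] n by simp
qed

end

context levi_decomposition
begin

lemma indecomposable_if_connected:
  assumes conn: "bip_connected n m edge"
  shows "indecomposable sc br"
  unfolding indecomposable_def
proof clarify
  fix A1 A2
  assume "ideal_in sc br A1 UNIV" "ideal_in sc br A2 UNIV" "A1 \<noteq> {0}" "A2 \<noteq> {0}" "A1 \<inter> A2 = {0}"
    "\<forall>v. \<exists>a1\<in>A1. \<exists>a2\<in>A2. v = a1 + a2"
  then interpret levi_ideal_splitting sc br g m Ik n A1 A2
    by unfold_locales
  obtain u where "u \<in> bip_vertices n m" "component u \<subseteq> A1 \<or> component u \<subseteq> A2"
    using component_in_summand[OF conn \<open>A1 \<noteq> {0}\<close>] .
  then show False
    using A2_trivial_if_connected[OF conn] flip.A2_trivial_if_connected[OF conn]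
      \<open>A1 \<noteq> {0}\<close> \<open>A2 \<noteq> {0}\<close> by blast
qed

end

theorem theorem3p5:
  fixes sc :: "complex \<Rightarrow> 'v::ab_group_add \<Rightarrow> 'v"
    and br :: "'v \<Rightarrow> 'v \<Rightarrow> 'v"
    and g :: "nat \<Rightarrow> 'v set" and m :: nat
    and Ik :: "nat \<Rightarrow> 'v set" and n :: nat
  assumes "leibniz_algebra sc br"
    and "finite_dim sc"
    and "semisimple_leibniz sc br"
    and "\<forall>i<m. simple_lie_subalg sc br (g i)"
    and "\<forall>i<m. \<forall>j<m. i \<noteq> j \<longrightarrow> (\<forall>x\<in>g i. \<forall>y\<in>g j. br x y = 0)"
    and "indep_family g m"
    and "subalg sc br (sumset g m)"
    and "sumset g m \<inter> sq_ideal sc br = {0}"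
    and "\<forall>v. \<exists>s\<in>sumset g m. \<exists>x\<in>sq_ideal sc br. v = s + x"
    and "\<forall>k<n. simple_submod sc br (sumset g m) (Ik k)"
    and "indep_family Ik n"
    and "sumset Ik n = sq_ideal sc br"
  shows "indecomposable sc br \<longleftrightarrow>
           bip_connected n m (\<lambda>k i. brset sc br (Ik k) (g i) = Ik k)"
proof -
  interpret levi_decomposition sc br g m Ik n
    using assms by unfold_locales blast+
  have "(\<lambda>k i. brset sc br (Ik k) (g i) = Ik k) = edge"
    unfolding edge_def ..
  then show ?thesis
    using indecomposable_if_connected decomposable_if_disconnected by auto
qed

end
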